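(* Let $n\ge 1$ and let $f\colon \mathbb Z_2^n\to\mathbb Z_2^n$ be any map. For $\vec y\in\mathbb Z_2^n$ let $A_{\vec y}=\{\vec x\in\mathbb Z_2^n : f(\vec x)=\vec y\}$ and let $d=\max_{\vec y\in\mathbb Z_2^n}|A_{\vec y}|$. Then for every integer $q$ with $0\le q<\lceil \log_2 d\rceil$ there is no reversible circuit consisting of NOT, CNOT and 2-CNOT gates on $n+q$ lines that implements $f$ with $q$ additional inputs.
   Context: For $m\ge1$, a $k$-CNOT gate $C^m_{i_1,\dots,i_k;j}$ on $m$ lines (with $j\notin\{i_1,\dots,i_k\}$, indices distinct) is the transformation $\mathbb Z_2^m\to\mathbb Z_2^m$, $\langle x_1,\dots,x_m\rangle\mapsto\langle x_1,\dots,x_j\oplus (x_{i_1}\wedge\dots\wedge x_{i_k}),\dots,x_m\rangle$ (only coordinate $j$ changes). NOT is the case $k=0$ (i.e. $x_j\mapsto x_j\oplus 1$), CNOT is $k=1$, 2-CNOT (Toffoli) is $k=2$. A reversible circuit on $m$ lines is a finite sequence of such gates; it computes the composition $g\colon\mathbb Z_2^m\to\mathbb Z_2^m$ of its gates, and its complexity is the number of gates. Let $\phi_{n,n+q}(\langle x_1,\dots,x_n\rangle)=\langle x_1,\dots,x_n,0,\dots,0\rangle\in\mathbb Z_2^{n+q}$ and $\psi_{n+q,n}(\langle x_1,\dots,x_{n+q}\rangle)=\langle x_1,\dots,x_n\rangle$. A circuit on $n+q$ lines computing $g$ implements $f\colon\mathbb Z_2^n\to\mathbb Z_2^n$ with $q$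 additional inputs if $\psi_{n+q,n}(g(\phi_{n,n+q}(\vec x)))=f(\vec x)$ for all $\vec x\in\mathbb Z_2^n$. *)

theory Defs
  imports Complex_Main
begin

text \<open>Boolean vectors in Z_2^m are represented as bool lists of length m;
  line i of the paper (1-based) is list index i-1 (0-based).
  A gate is given by its list of control lines and its target line.\<close>

datatype gate = Gate "nat list" nat

fun gate_ok :: "nat \<Rightarrow> gate \<Rightarrow> bool" where
  "gate_ok m (Gate cs j) \<longleftrightarrow>
     distinct cs \<and> j \<notin> set cs \<and> j < m \<and> (\<forall>i\<in>set cs. i < m)"

text \<open>k-CNOT with k = length of control list; x_j := x_j xor (AND of controls).
  With no controls this is NOT.\<close>
fun apply_gate :: "gate \<Rightarrow> bool list \<Rightarrow> bool list" where
  "apply_gate (Gate cs j) x = x[j := (x ! j \<noteq> (\<forall>i\<in>set cs. x ! i))]"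

definition run_circuit :: "gate list \<Rightarrow> bool list \<Rightarrow> bool list" where
  "run_circuit c x = fold apply_gate c x"

definition NCT_circuit :: "nat \<Rightarrow> gate list \<Rightarrow> bool" where
  "NCT_circuit m c \<longleftrightarrow>
     (\<forall>g\<in>set c. gate_ok m g \<and> (case g of Gate cs j \<Rightarrow> length cs \<le> 2))"

definition implements_with :: "nat \<Rightarrow> nat \<Rightarrow> gate list \<Rightarrow> (bool list \<Rightarrow> bool list) \<Rightarrow> bool" where
  "implements_with n q c f \<longleftrightarrow>
     (\<forall>x. length x = n \<longrightarrow> take n (run_circuit c (x @ replicate q False)) = f x)"

definition vecs :: "nat \<Rightarrow> bool list set" where
  "vecs n = {x. length x = n}"

definition max_preimage :: "nat \<Rightarrow> (bool list \<Rightarrow> bool list) \<Rightarrow> nat" where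
  "max_preimage n f = Max ((\<lambda>y. card {x \<in> vecs n. f x = y}) ` vecs n)"

end

theory Submission
  imports Defs
begin

text \<open>Every NCT gate is an involution, so an NCT circuit computes a bijection of the
  $(n+q)$-bit vectors. If it implements $f$ with $q$ ancillas, two inputs in the same
  fibre of $f$ have outputs with equal first $n$ bits, so they must differ in the last
  $q$ bits; hence every fibre has at most $2^q$ elements, i.e. $d \le 2^q$ and
  $\lceil \log_2 d \rceil \le q$.\<close>

lemma apply_gate_involutive:
  assumes "j \<notin> set cs"
  shows "apply_gate (Gate cs j) (apply_gate (Gate cs j) x) = x"
proof -
  define P where "P = (\<forall>i\<in>set cs. x ! i)"
  have controls_unchanged: "(\<forall>i\<in>set cs. x[j := b] ! i) = P" for b
    using assms unfolding P_def by (metis nth_list_update_neq)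
  have "x[j := x ! j \<noteq> P, j := (x[j := x ! j \<noteq> P] ! j \<noteq> P)] = x"
  proof (cases "j < length x")
    case True
    have "((x ! j \<noteq> P) \<noteq> P) = x ! j" by blast
    with True show ?thesis by (simp only: list_update_overwrite nth_list_update_eq list_update_id)
  qed (simp add: list_update_beyond)
  then show ?thesis
    by (simp only: apply_gate.simps controls_unchanged P_def[symmetric])
qed

lemma inj_apply_gate: "gate_ok m g \<Longrightarrow> inj (apply_gate g)"
  by (cases g) (metis apply_gate_involutive gate_ok.simps injI)

lemma length_apply_gate: "length (apply_gate g x) = length x"
  by (cases g) auto

lemma length_run_circuit: "length (run_circuit c x) = length x"
  unfolding run_circuit_def by (induction c arbitrary: x) (auto simp: length_apply_gate)

lemma inj_run_circuit:
  assumes "\<forall>g\<in>set c. gate_ok m g"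
  shows "inj (run_circuit c)"
  using assms unfolding run_circuit_def
proof (induction c)
  case Nil
  then show ?case by simp
next
  case (Cons g c)
  then have "inj (fold apply_gate c \<circ> apply_gate g)"
    by (intro inj_compose) (auto intro: inj_apply_gate)
  then show ?case by (simp add: comp_def)
qed

lemma vecs_eq_lists: "vecs n = {xs. set xs \<subseteq> UNIV \<and> length xs = n}"
  by (auto simp: vecs_def)

lemma finite_vecs: "finite (vecs n)"
  using finite_lists_length_eq[of "UNIV :: bool set" n] by (simp add: vecs_eq_lists)

lemma card_vecs: "card (vecs n) = 2 ^ n"
  using card_lists_length_eq[of "UNIV :: bool set" n] by (simp add: vecs_eq_lists)

lemma card_fibre_le_ancilla_states:
  fixes g :: "bool list \<Rightarrow> bool list"
  assumes "inj g" and "\<And>x. length (g x) = length x"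
    and "\<And>x. x \<in> vecs n \<Longrightarrow> take n (g (x @ replicate q False)) = f x"
  shows "card {x \<in> vecs n. f x = y} \<le> 2 ^ q"
proof -
  let ?A = "{x \<in> vecs n. f x = y}"
  let ?ancillas = "\<lambda>x. drop n (g (x @ replicate q False))"
  have "inj_on ?ancillas ?A"
  proof (rule inj_onI)
    fix a b assume "a \<in> ?A" "b \<in> ?A" and same_ancillas: "?ancillas a = ?ancillas b"
    then have "take n (g (a @ replicate q False)) = take n (g (b @ replicate q False))"
      using assms(3) by simp
    with same_ancillas have "g (a @ replicate q False) = g (b @ replicate q False)"
      by (metis append_take_drop_id)
    with \<open>inj g\<close> show "a = b" by (auto dest: injD)
  qed
  moreover have "?ancillas ` ?A \<subseteq> vecs q"
    by (auto simp: vecs_def assms(2))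
  ultimately have "card ?A \<le> card (vecs q)"
    by (metis card_inj_on_le finite_vecs)
  then show ?thesis by (simp add: card_vecs)
qed

lemma max_preimage_le:
  assumes "\<And>y. card {x \<in> vecs n. f x = y} \<le> k"
  shows "max_preimage n f \<le> k"
proof -
  have "replicate n False \<in> vecs n" by (simp add: vecs_def)
  then show ?thesis
    unfolding max_preimage_def using finite_vecs assms by (subst Max_le_iff) auto
qed

lemma ceiling_log2_le:
  assumes "d \<le> 2 ^ q"
  shows "\<lceil>log 2 (real d)\<rceil> \<le> int q"
proof (cases "d = 0")
  case True
  then show ?thesis by (simp add: log_def)
next
  case False
  then have "log 2 (real d) \<le> log 2 (2 ^ q)"
    using assms by (subst log_le_cancel_iff) auto
  then show ?thesis by (simp add: ceiling_le_iff)
qed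

theorem mainTheorem1:
  fixes n q :: nat and f :: "bool list \<Rightarrow> bool list"
  assumes "n \<ge> 1"
    and "\<forall>x. length x = n \<longrightarrow> length (f x) = n"
    and "int q < \<lceil>log 2 (real (max_preimage n f))\<rceil>"
  shows "\<not> (\<exists>c. NCT_circuit (n + q) c \<and> implements_with n q c f)"
proof
  assume "\<exists>c. NCT_circuit (n + q) c \<and> implements_with n q c f"
  then obtain c where "NCT_circuit (n + q) c" and implements: "implements_with n q c f"
    by blast
  then have "inj (run_circuit c)"
    by (intro inj_run_circuit) (auto simp: NCT_circuit_def)
  then have "card {x \<in> vecs n. f x = y} \<le> 2 ^ q" for y
    using implements
    by (intro card_fibre_le_ancilla_states[where g = "run_circuit c"])
      (auto simp: length_run_circuit implements_with_def vecs_def)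
  then have "\<lceil>log 2 (real (max_preimage n f))\<rceil> \<le> int q"
    by (intro ceiling_log2_le max_preimage_le)
  with assms(3) show False by simp
qed

end
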